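(* Let $H=\sum_ic_iP_i$ be a Pauli Hamiltonian, $|\psi\rangle$ a state, $\mathcal{G}=(G^{[1]},\dots,G^{[m]})$ an overlapped grouping of $H$ and $M_1,\dots,M_m$ positive shot counts. Assume (1) the shot batches of different groups are independent, and (2) for every group $G^{[j]}$ and all distinct $P_i,P_k\in G^{[j]}$, $\mathrm{Cov}(\overline{\langle P_i\rangle}_{(j)},\overline{\langle P_k\rangle}_{(j)})=0$. Then among all unbiased energy estimators $\overline{E}_{\mathcal{G}}(w)=\sum_ic_i\sum_{j\in\Gamma(i)}w_{i,j}\overline{\langle P_i\rangle}_{(j)}$ with $\sum_{j\in\Gamma(i)}w_{i,j}=1$ for every $i$, the minimum variance is attained by the weights $w_{i,j}=M_j/\sum_{k\in\Gamma(i)}M_k$.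
   Context: A Pauli Hamiltonian is $H=\sum_{i=1}^Nc_iP_i$ with real nonzero $c_i$ and distinct $n$-qubit Pauli strings. An overlapped grouping is a list of sets of mutually commuting operators from $\{P_1,\dots,P_N\}$ whose union is $\{P_1,\dots,P_N\}$ (not necessarily disjoint). Group $G^{[j]}$ is measured in $M_j$ independent shots, each shot giving simultaneous $\pm1$ outcomes of all its operators with the Born-rule distribution for $|\psi\rangle$; $\overline{\langle P_i\rangle}_{(j)}$ is the sample mean of the outcomes of $P_i$ over those $M_j$ shots (variance $(1-\langle P_i\rangle^2)/M_j$). $\Gamma(i)=\{j:P_i\in G^{[j]}\}$. *)

theory Defs
  imports "HOL-Probability.Probability"
begin

datatype pauli = PI | PX | PY | PZ

type_synonym pauli_string = "pauli list"

text \<open>Two n-qubit Pauli strings commute iff they anticommute on an even number of sites.\<close>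
definition pstr_commute :: "pauli_string \<Rightarrow> pauli_string \<Rightarrow> bool" where
  "pstr_commute p q \<longleftrightarrow>
     even (card {k. k < length p \<and> p ! k \<noteq> PI \<and> q ! k \<noteq> PI \<and> p ! k \<noteq> q ! k})"

definition pauli_hamiltonian :: "nat \<Rightarrow> nat \<Rightarrow> (nat \<Rightarrow> real) \<Rightarrow> (nat \<Rightarrow> pauli_string) \<Rightarrow> bool" where
  "pauli_hamiltonian n N c P \<longleftrightarrow>
     (\<forall>i<N. length (P i) = n \<and> c i \<noteq> 0) \<and> inj_on P {..<N}"

definition overlapped_grouping :: "nat \<Rightarrow> (nat \<Rightarrow> pauli_string) \<Rightarrow> nat \<Rightarrow> (nat \<Rightarrow> nat set) \<Rightarrow> bool" where
  "overlapped_grouping N P m G \<longleftrightarrow>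
     (\<forall>j<m. G j \<subseteq> {..<N} \<and> (\<forall>i\<in>G j. \<forall>k\<in>G j. pstr_commute (P i) (P k)))
     \<and> (\<Union>j<m. G j) = {..<N}"

definition Gamma :: "nat \<Rightarrow> (nat \<Rightarrow> nat set) \<Rightarrow> nat \<Rightarrow> nat set" where
  "Gamma m G i = {j. j < m \<and> i \<in> G j}"

definition (in prob_space) covariance :: "('a \<Rightarrow> real) \<Rightarrow> ('a \<Rightarrow> real) \<Rightarrow> real" where
  "covariance X Y = expectation (\<lambda>x. (X x - expectation X) * (Y x - expectation Y))"

definition energy_estimator ::
  "nat \<Rightarrow> nat \<Rightarrow> (nat \<Rightarrow> nat set) \<Rightarrow> (nat \<Rightarrow> real) \<Rightarrow> (nat \<Rightarrow> nat \<Rightarrow> 'a \<Rightarrow> real)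
    \<Rightarrow> (nat \<Rightarrow> nat \<Rightarrow> real) \<Rightarrow> 'a \<Rightarrow> real" where
  "energy_estimator N m G c Xbar w \<omega> =
     (\<Sum>i<N. c i * (\<Sum>j\<in>Gamma m G i. w i j * Xbar i j \<omega>))"

definition admissible_weights :: "nat \<Rightarrow> nat \<Rightarrow> (nat \<Rightarrow> nat set) \<Rightarrow> (nat \<Rightarrow> nat \<Rightarrow> real) \<Rightarrow> bool" where
  "admissible_weights N m G w \<longleftrightarrow> (\<forall>i<N. (\<Sum>j\<in>Gamma m G i. w i j) = 1)"

definition optimal_weights :: "nat \<Rightarrow> (nat \<Rightarrow> nat set) \<Rightarrow> (nat \<Rightarrow> nat) \<Rightarrow> nat \<Rightarrow> nat \<Rightarrow> real" where
  "optimal_weights m G Ms i j = real (Ms j) / (\<Sum>k\<in>Gamma m G i. real (Ms k))"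

end

theory Submission
  imports Defs
begin

(* The estimator is a linear combination of the sample means Xbar i j, which are pairwise
   uncorrelated: within a group by hypothesis, across groups by independence. Hence its variance is
   sum_i c_i^2 (1 - <P_i>^2) sum_{j in Gamma(i)} w_ij^2 / M_j, and the constraints decouple in i.
   For each i, Cauchy-Schwarz gives 1 = (sum_j w_ij)^2 <= (sum_j w_ij^2 / M_j) (sum_j M_j),
   with equality for w_ij proportional to M_j. *)

lemma integrable_mult_if_square_integrable:
  fixes X Y :: "'a \<Rightarrow> real"
  assumes [measurable]: "X \<in> borel_measurable M" "Y \<in> borel_measurable M"
    and "integrable M (\<lambda>x. (X x)\<^sup>2)" "integrable M (\<lambda>x. (Y x)\<^sup>2)"
  shows "integrable M (\<lambda>x. X x * Y x)"
proof (rule Bochner_Integration.integrable_bound)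
  show "integrable M (\<lambda>x. (X x)\<^sup>2 + (Y x)\<^sup>2)"
    using assms by auto
  show "AE x in M. norm (X x * Y x) \<le> norm ((X x)\<^sup>2 + (Y x)\<^sup>2)"
  proof (rule AE_I2)
    fix x
    have "2 * \<bar>X x\<bar> * \<bar>Y x\<bar> \<le> (X x)\<^sup>2 + (Y x)\<^sup>2"
      using sum_squares_bound[of "\<bar>X x\<bar>" "\<bar>Y x\<bar>"] by simp
    then have "\<bar>X x * Y x\<bar> \<le> (X x)\<^sup>2 + (Y x)\<^sup>2"
      unfolding abs_mult using mult_nonneg_nonneg[OF abs_ge_zero abs_ge_zero, of "X x" "Y x"]
      by linarith
    then show "norm (X x * Y x) \<le> norm ((X x)\<^sup>2 + (Y x)\<^sup>2)"
      by simp
  qed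
qed measurable

lemma (in finite_measure) square_integrable_diff_const:
  fixes X :: "'a \<Rightarrow> real"
  assumes [measurable]: "X \<in> borel_measurable M"
    and "integrable M (\<lambda>x. (X x)\<^sup>2)"
  shows "integrable M (\<lambda>x. (X x - e)\<^sup>2)"
proof -
  have "integrable M X"
    using assms square_integrable_imp_integrable by blast
  then have "integrable M (\<lambda>x. (X x)\<^sup>2 + e\<^sup>2 - 2 * X x * e)"
    using assms by auto
  then show ?thesis
    by (simp add: power2_diff)
qed

lemma (in prob_space) covariance_self: "covariance X X = variance X"
  by (simp add: covariance_def power2_eq_square)

lemma (in prob_space) variance_sum_eq_sum_covariance:
  fixes Y :: "'i \<Rightarrow> 'a \<Rightarrow> real"
  assumes meas: "\<And>s. s \<in> S \<Longrightarrow> Y s \<in> borel_measurable M"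
    and sq: "\<And>s. s \<in> S \<Longrightarrow> integrable M (\<lambda>x. (Y s x)\<^sup>2)"
  shows "variance (\<lambda>x. \<Sum>s\<in>S. a s * Y s x)
    = (\<Sum>s\<in>S. \<Sum>t\<in>S. a s * a t * covariance (Y s) (Y t))"
proof -
  define Z where "Z s x = Y s x - expectation (Y s)" for s x
  have "integrable M (Y s)" if "s \<in> S" for s
    using meas[OF that] sq[OF that] square_integrable_imp_integrable by blast
  then have centered: "(\<Sum>s\<in>S. a s * Y s x) - expectation (\<lambda>x. \<Sum>s\<in>S. a s * Y s x)
      = (\<Sum>s\<in>S. a s * Z s x)" for x
    by (simp add: Z_def sum_subtractf right_diff_distrib)
  have "integrable M (\<lambda>x. Z s x * Z t x)" if "s \<in> S" "t \<in> S" for s t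
    using that meas sq unfolding Z_def
    by (intro integrable_mult_if_square_integrable square_integrable_diff_const) auto
  then have "variance (\<lambda>x. \<Sum>s\<in>S. a s * Y s x)
      = (\<Sum>s\<in>S. \<Sum>t\<in>S. a s * a t * expectation (\<lambda>x. Z s x * Z t x))"
    unfolding centered by (simp add: power2_eq_square sum_product mult_ac)
  then show ?thesis
    by (simp add: covariance_def Z_def)
qed

lemma (in prob_space) variance_sum_uncorrelated:
  fixes Y :: "'i \<Rightarrow> 'a \<Rightarrow> real"
  assumes "finite S"
    and "\<And>s. s \<in> S \<Longrightarrow> Y s \<in> borel_measurable M"
    and "\<And>s. s \<in> S \<Longrightarrow> integrable M (\<lambda>x. (Y s x)\<^sup>2)"
    and uncorrelated: "\<And>s t. s \<in> S \<Longrightarrow> t \<in> S \<Longrightarrow> s \<noteq> t \<Longrightarrow> covariance (Y s) (Y t) = 0"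
  shows "variance (\<lambda>x. \<Sum>s\<in>S. a s * Y s x) = (\<Sum>s\<in>S. (a s)\<^sup>2 * variance (Y s))"
proof -
  have "(\<Sum>t\<in>S. a s * a t * covariance (Y s) (Y t))
      = (\<Sum>t\<in>S. if s = t then (a s)\<^sup>2 * variance (Y s) else 0)" if "s \<in> S" for s
    using that uncorrelated by (intro sum.cong) (auto simp: covariance_self power2_eq_square)
  then show ?thesis
    using assms by (simp add: variance_sum_eq_sum_covariance)
qed

lemma (in prob_space) covariance_eq_0_if_indep_var:
  fixes X Y :: "'a \<Rightarrow> real"
  assumes "indep_var borel X borel Y" "integrable M X" "integrable M Y"
  shows "covariance X Y = 0"
proof -
  have "indep_var borel ((\<lambda>x. x - expectation X) \<circ> X) borel ((\<lambda>y. y - expectation Y) \<circ> Y)"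
    using assms(1) by (rule indep_var_compose) auto
  then have "covariance X Y
      = expectation (\<lambda>x. X x - expectation X) * expectation (\<lambda>x. Y x - expectation Y)"
    unfolding covariance_def using assms(2,3)
    by (intro indep_var_lebesgue_integral) (auto simp: comp_def)
  then show ?thesis
    using assms(2) by (simp add: prob_space)
qed

lemma (in prob_space) covariance_eq_0_if_indep_groups:
  fixes X :: "'i \<Rightarrow> 'j \<Rightarrow> 'a \<Rightarrow> real"
  assumes indep: "indep_vars (\<lambda>j. \<Pi>\<^sub>M i\<in>G j. borel) (\<lambda>j \<omega>. \<lambda>i\<in>G j. X i j \<omega>) J"
    and "j \<in> J" "l \<in> J" "j \<noteq> l" "i \<in> G j" "k \<in> G l"
    and "integrable M (X i j)" "integrable M (X k l)"
  shows "covariance (X i j) (X k l) = 0"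
proof (rule covariance_eq_0_if_indep_var)
  let ?group = "\<lambda>j \<omega>. \<lambda>i\<in>G j. X i j \<omega>"
  have "indep_var (\<Pi>\<^sub>M j'\<in>{j}. \<Pi>\<^sub>M i\<in>G j'. borel) (\<lambda>\<omega>. restrict (\<lambda>j'. ?group j' \<omega>) {j})
      (\<Pi>\<^sub>M j'\<in>{l}. \<Pi>\<^sub>M i\<in>G j'. borel) (\<lambda>\<omega>. restrict (\<lambda>j'. ?group j' \<omega>) {l})"
    using assms by (intro indep_var_restrict[OF indep]) auto
  then have "indep_var borel ((\<lambda>f. f j i) \<circ> (\<lambda>\<omega>. restrict (\<lambda>j'. ?group j' \<omega>) {j}))
      borel ((\<lambda>f. f l k) \<circ> (\<lambda>\<omega>. restrict (\<lambda>j'. ?group j' \<omega>) {l}))"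
  proof (rule indep_var_compose)
    have "(\<lambda>f. f j' i') \<in> borel_measurable (\<Pi>\<^sub>M j\<in>{j'}. \<Pi>\<^sub>M i\<in>G j. borel)"
      if "i' \<in> G j'" for i' j'
      using measurable_compose[OF measurable_component_singleton[of j' "{j'}" "\<lambda>j. \<Pi>\<^sub>M i\<in>G j. borel"]
          measurable_component_singleton[OF that]]
      by simp
    then show "(\<lambda>f. f j i) \<in> borel_measurable (\<Pi>\<^sub>M j'\<in>{j}. \<Pi>\<^sub>M i\<in>G j'. borel)"
      and "(\<lambda>f. f l k) \<in> borel_measurable (\<Pi>\<^sub>M j'\<in>{l}. \<Pi>\<^sub>M i\<in>G j'. borel)"
      using assms by auto
  qed
  then show "indep_var borel (X i j) borel (X k l)"
    using assms by (simp add: comp_def)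
qed (use assms in auto)

lemma (in prob_space) covariance_eq_0_grouped:
  fixes X :: "'i \<Rightarrow> 'j \<Rightarrow> 'a \<Rightarrow> real"
  assumes indep: "indep_vars (\<lambda>j. \<Pi>\<^sub>M i\<in>G j. borel) (\<lambda>j \<omega>. \<lambda>i\<in>G j. X i j \<omega>) J"
    and uncorrelated_in_group: "\<And>j i k. j \<in> J \<Longrightarrow> i \<in> G j \<Longrightarrow> k \<in> G j \<Longrightarrow> i \<noteq> k \<Longrightarrow>
      covariance (X i j) (X k j) = 0"
    and meas: "\<And>j i. j \<in> J \<Longrightarrow> i \<in> G j \<Longrightarrow> X i j \<in> borel_measurable M"
    and sq: "\<And>j i. j \<in> J \<Longrightarrow> i \<in> G j \<Longrightarrow> integrable M (\<lambda>x. (X i j x)\<^sup>2)"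
    and "j \<in> J" "i \<in> G j" "l \<in> J" "k \<in> G l" "(i, j) \<noteq> (k, l)"
  shows "covariance (X i j) (X k l) = 0"
proof (cases "j = l")
  case True
  then show ?thesis
    using assms(5-) by (auto intro: uncorrelated_in_group)
next
  case False
  have "integrable M (X i j)" "integrable M (X k l)"
    using assms(5-) meas sq square_integrable_imp_integrable by blast+
  then show ?thesis
    using False assms(5-) by (intro covariance_eq_0_if_indep_groups[OF indep]) auto
qed

lemma finite_Gamma [simp]: "finite (Gamma m G i)"
  by (simp add: Gamma_def)

lemma (in prob_space) variance_energy_estimator:
  assumes meas: "\<And>i j. j < m \<Longrightarrow> i \<in> G j \<Longrightarrow> Xbar i j \<in> borel_measurable M"
    and sq: "\<And>i j. j < m \<Longrightarrow> i \<in> G j \<Longrightarrow> integrable M (\<lambda>\<omega>. (Xbar i j \<omega>)\<^sup>2)"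
    and uncorrelated: "\<And>i j k l. j < m \<Longrightarrow> i \<in> G j \<Longrightarrow> l < m \<Longrightarrow> k \<in> G l \<Longrightarrow>
      (i, j) \<noteq> (k, l) \<Longrightarrow> covariance (Xbar i j) (Xbar k l) = 0"
  shows "variance (energy_estimator N m G c Xbar w)
    = (\<Sum>i<N. (c i)\<^sup>2 * (\<Sum>j\<in>Gamma m G i. (w i j)\<^sup>2 * variance (Xbar i j)))"
proof -
  define S where "S = Sigma {..<N} (Gamma m G)"
  have S_iff: "p \<in> S \<longleftrightarrow> fst p < N \<and> snd p < m \<and> fst p \<in> G (snd p)" for p
    by (cases p) (auto simp: S_def Gamma_def)
  have "finite S"
    by (simp add: S_def)
  have estimator_eq: "energy_estimator N m G c Xbar w
      = (\<lambda>\<omega>. \<Sum>p\<in>S. (c (fst p) * w (fst p) (snd p)) * Xbar (fst p) (snd p) \<omega>)"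
    by (simp add: fun_eq_iff energy_estimator_def S_def sum_distrib_left sum.Sigma split_beta mult_ac)
  have "variance (energy_estimator N m G c Xbar w)
      = (\<Sum>p\<in>S. (c (fst p) * w (fst p) (snd p))\<^sup>2 * variance (Xbar (fst p) (snd p)))"
    unfolding estimator_eq using \<open>finite S\<close> meas sq uncorrelated
    by (intro variance_sum_uncorrelated) (auto simp: S_iff prod_eq_iff)
  also have "\<dots> = (\<Sum>i<N. (c i)\<^sup>2 * (\<Sum>j\<in>Gamma m G i. (w i j)\<^sup>2 * variance (Xbar i j)))"
    by (simp add: S_def sum.Sigma split_beta sum_distrib_left power_mult_distrib mult_ac)
  finally show ?thesis .
qed

lemma sum_square_div_ge_inverse_sum:
  fixes w M :: "'i \<Rightarrow> real"
  assumes pos: "\<And>j. j \<in> J \<Longrightarrow> M j > 0" and total: "(\<Sum>j\<in>J. w j) = 1"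
  shows "1 / (\<Sum>j\<in>J. M j) \<le> (\<Sum>j\<in>J. (w j)\<^sup>2 / M j)"
proof -
  have "J \<noteq> {}" "finite J"
    using total by (auto intro: ccontr)
  then have "(\<Sum>j\<in>J. M j) > 0"
    using pos by (intro sum_pos) auto
  have "(\<Sum>j\<in>J. (w j / sqrt (M j)) * sqrt (M j)) = (\<Sum>j\<in>J. w j)"
    using pos by (intro sum.cong) (auto simp: less_imp_neq[symmetric])
  then have "1 = (\<Sum>j\<in>J. (w j / sqrt (M j)) * sqrt (M j))\<^sup>2"
    using total by simp
  also have "\<dots> \<le> (\<Sum>j\<in>J. (w j / sqrt (M j))\<^sup>2) * (\<Sum>j\<in>J. (sqrt (M j))\<^sup>2)"
    by (rule Cauchy_Schwarz_ineq_sum)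
  also have "\<dots> = (\<Sum>j\<in>J. (w j)\<^sup>2 / M j) * (\<Sum>j\<in>J. M j)"
    using pos by (simp add: power_divide less_imp_le cong: sum.cong)
  finally show ?thesis
    using \<open>(\<Sum>j\<in>J. M j) > 0\<close> by (simp add: divide_le_eq)
qed

lemma sum_square_div_proportional:
  fixes M :: "'i \<Rightarrow> real"
  shows "(\<Sum>j\<in>J. (M j / (\<Sum>k\<in>J. M k))\<^sup>2 / M j) = 1 / (\<Sum>k\<in>J. M k)"
proof -
  have "(M j / S)\<^sup>2 / M j = M j / S\<^sup>2" for j and S :: real
    by (cases "M j = 0") (simp_all add: power2_eq_square)
  then show ?thesis
    by (simp add: sum_divide_distrib[symmetric] power2_eq_square)
qed

lemma sum_square_div_optimal_weights_le:
  assumes "admissible_weights N m G w" "i < N" "\<forall>j<m. Ms j > 0"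
  shows "(\<Sum>j\<in>Gamma m G i. (optimal_weights m G Ms i j)\<^sup>2 / real (Ms j))
    \<le> (\<Sum>j\<in>Gamma m G i. (w i j)\<^sup>2 / real (Ms j))"
  unfolding optimal_weights_def sum_square_div_proportional
  using assms by (intro sum_square_div_ge_inverse_sum) (auto simp: admissible_weights_def Gamma_def)

lemma admissible_optimal_weights:
  assumes "overlapped_grouping N P m G" "\<forall>j<m. Ms j > 0"
  shows "admissible_weights N m G (optimal_weights m G Ms)"
  unfolding admissible_weights_def optimal_weights_def
proof (intro allI impI)
  fix i assume "i < N"
  then have "i \<in> (\<Union>j<m. G j)"
    using assms(1) by (simp add: overlapped_grouping_def)
  then obtain j where "j < m" "i \<in> G j"
    by blast
  then have "(\<Sum>k\<in>Gamma m G i. real (Ms k)) > 0"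
    using assms(2) by (intro sum_pos2[of _ j]) (auto simp: Gamma_def)
  then show "(\<Sum>j\<in>Gamma m G i. real (Ms j) / (\<Sum>k\<in>Gamma m G i. real (Ms k))) = 1"
    by (simp add: sum_divide_distrib[symmetric])
qed

theorem lemma1:
  fixes \<Omega> :: "'a measure"
    and n N m :: nat
    and c :: "nat \<Rightarrow> real"
    and P :: "nat \<Rightarrow> pauli_string"
    and G :: "nat \<Rightarrow> nat set"
    and Ms :: "nat \<Rightarrow> nat"
    and ev :: "nat \<Rightarrow> real"
    and Xbar :: "nat \<Rightarrow> nat \<Rightarrow> 'a \<Rightarrow> real"
  assumes "prob_space \<Omega>"
    and "pauli_hamiltonian n N c P"
    and "overlapped_grouping N P m G"
    and "\<forall>j<m. Ms j > 0"
    and "\<forall>i<N. \<bar>ev i\<bar> \<le> 1"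
    and "\<forall>j<m. \<forall>i\<in>G j. Xbar i j \<in> borel_measurable \<Omega>
            \<and> integrable \<Omega> (\<lambda>\<omega>. (Xbar i j \<omega>)\<^sup>2)
            \<and> prob_space.expectation \<Omega> (Xbar i j) = ev i
            \<and> prob_space.variance \<Omega> (Xbar i j) = (1 - (ev i)\<^sup>2) / real (Ms j)"
    and indep: "prob_space.indep_vars \<Omega> (\<lambda>j. \<Pi>\<^sub>M i\<in>G j. borel)
                  (\<lambda>j \<omega>. \<lambda>i\<in>G j. Xbar i j \<omega>) {..<m}"
    and uncorr: "\<forall>j<m. \<forall>i\<in>G j. \<forall>k\<in>G j. i \<noteq> k \<longrightarrow>
                  prob_space.covariance \<Omega> (Xbar i j) (Xbar k j) = 0"
  shows "admissible_weights N m G (optimal_weights m G Ms)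
    \<and> (\<forall>w. admissible_weights N m G w \<longrightarrow>
          prob_space.variance \<Omega> (energy_estimator N m G c Xbar (optimal_weights m G Ms))
            \<le> prob_space.variance \<Omega> (energy_estimator N m G c Xbar w))"
proof -
  interpret prob_space \<Omega> by fact
  have meas: "Xbar i j \<in> borel_measurable \<Omega>"
    and sq: "integrable \<Omega> (\<lambda>\<omega>. (Xbar i j \<omega>)\<^sup>2)"
    and var: "variance (Xbar i j) = (1 - (ev i)\<^sup>2) / real (Ms j)"
    if "j < m" "i \<in> G j" for i j
    using assms(6) that by blast+
  have uncorrelated: "covariance (Xbar i j) (Xbar k l) = 0"
    if "j < m" "i \<in> G j" "l < m" "k \<in> G l" "(i, j) \<noteq> (k, l)" for i j k l
    by (rule covariance_eq_0_grouped[OF indep, unfolded lessThan_iff]) (use that uncorr meas sq in auto)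
  have variance_eq: "variance (energy_estimator N m G c Xbar w)
      = (\<Sum>i<N. (c i)\<^sup>2 * (1 - (ev i)\<^sup>2) * (\<Sum>j\<in>Gamma m G i. (w i j)\<^sup>2 / real (Ms j)))" for w
  proof -
    have "variance (energy_estimator N m G c Xbar w)
        = (\<Sum>i<N. (c i)\<^sup>2 * (\<Sum>j\<in>Gamma m G i. (w i j)\<^sup>2 * variance (Xbar i j)))"
      by (rule variance_energy_estimator[OF meas sq uncorrelated])
    also have "\<dots> = (\<Sum>i<N. (c i)\<^sup>2 * (1 - (ev i)\<^sup>2) * (\<Sum>j\<in>Gamma m G i. (w i j)\<^sup>2 / real (Ms j)))"
      using var by (auto simp: Gamma_def sum_distrib_left mult_ac intro!: sum.cong)
    finally show ?thesis .
  qed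
  have ev_square_le_1: "(ev i)\<^sup>2 \<le> 1" if "i < N" for i
    using assms(5) that abs_le_square_iff[of "ev i" 1] by simp
  show ?thesis
  proof (intro conjI allI impI)
    show "admissible_weights N m G (optimal_weights m G Ms)"
      using assms(3,4) by (rule admissible_optimal_weights)
    fix w assume w: "admissible_weights N m G w"
    show "variance (energy_estimator N m G c Xbar (optimal_weights m G Ms))
        \<le> variance (energy_estimator N m G c Xbar w)"
      unfolding variance_eq
      by (rule sum_mono, rule mult_left_mono)
         (use ev_square_le_1 sum_square_div_optimal_weights_le[OF w _ assms(4)] in auto)
  qed
qed

end
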